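(* Let $(x_n)_{n\in\mathbb{Z}^{\geq 0}}$ be a sequence of real numbers satisfying $x_{n+1} = x_n x_{n-1} - x_{n-2}$ for all $n\geq 2$. If there exists some $N\in\mathbb{Z}^{\geq0}$ such that $$2<|x_N|, \quad |x_N|<|x_{N+1}|, \quad |x_{N+1}|<|x_{N+2}|,$$ then $|x_n|>2$ for all $n\geq N$ and $|x_n|\to\infty$ as $n\to\infty$.
   Context: The initial values $x_0,x_1,x_2$ are arbitrary real numbers, and all subsequent terms are determined by the recursion. *)

theory Defs
  imports Complex_Main
begin

end

theory Submission
  imports Defs
begin

text \<open>Put \<open>y n = \<bar>x (N + n)\<bar>\<close>. The triangle inequality gives
  \<open>y (n + 3) \<ge> y (n + 2) * y (n + 1) - y n\<close>, hence
  \<open>y (n + 3) - y (n + 2) \<ge> y (n + 2) - y n\<close> as long as \<open>y (n + 1) \<ge> 2\<close>. So a positive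
  lower bound \<open>\<delta>\<close> on two consecutive increments propagates to all later increments:
  \<open>y\<close> stays above 2 and grows at least linearly.\<close>

lemma increments_ge_of_mult_recurrence_ge:
  fixes y :: "nat \<Rightarrow> 'a::linordered_idom"
  assumes rec: "\<And>n. y (n + 2) * y (n + 1) - y n \<le> y (n + 3)"
    and "0 < \<delta>" and "2 < y 0" and "y 0 + \<delta> \<le> y 1" and "y 1 + \<delta> \<le> y 2"
  shows "2 < y n \<and> y n + \<delta> \<le> y (n + 1) \<and> y (n + 1) + \<delta> \<le> y (n + 2)"
proof (induction n)
  case 0
  then show ?case using assms by (simp add: numeral_2_eq_2)
next
  case (Suc n)
  then have "2 < y (n + 1)" "0 \<le> y (n + 2)" using \<open>0 < \<delta>\<close> by auto
  then have "2 * y (n + 2) \<le> y (n + 2) * y (n + 1)"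
    by (metis less_imp_le mult.commute mult_right_mono)
  with rec[of n] Suc.IH \<open>0 < \<delta>\<close> have "y (n + 2) + \<delta> \<le> y (n + 3)" by linarith
  with Suc.IH \<open>2 < y (n + 1)\<close> show ?case by (simp add: numeral_3_eq_3)
qed

lemma linear_lower_bound_of_increments_ge:
  fixes y :: "nat \<Rightarrow> 'a::linordered_semidom"
  assumes "\<And>n. y n + \<delta> \<le> y (Suc n)"
  shows "y 0 + of_nat n * \<delta> \<le> y n"
proof (induction n)
  case (Suc n)
  then have "y 0 + of_nat (Suc n) * \<delta> \<le> y n + \<delta>"
    by (simp add: algebra_simps)
  then show ?case using assms[of n] by order
qed simp

lemma filterlim_at_top_of_increments_ge:
  fixes y :: "nat \<Rightarrow> real"
  assumes "0 < \<delta>" and "\<And>n. y n + \<delta> \<le> y (Suc n)"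
  shows "filterlim y at_top sequentially"
proof (rule filterlim_at_top_mono)
  show "filterlim (\<lambda>n. y 0 + real n * \<delta>) at_top sequentially"
    by (intro filterlim_tendsto_add_at_top[OF tendsto_const] filterlim_at_top_mult_tendsto_pos
        [OF tendsto_const \<open>0 < \<delta>\<close> filterlim_real_sequentially])
  show "\<forall>\<^sub>F n in sequentially. y 0 + real n * \<delta> \<le> y n"
    using linear_lower_bound_of_increments_ge[where y = y, OF assms(2)] by simp
qed

theorem lemma1:
  fixes x :: "nat \<Rightarrow> real" and N :: nat
  assumes rec: "\<And>n. n \<ge> 2 \<Longrightarrow> x (n + 1) = x n * x (n - 1) - x (n - 2)"
    and h1: "2 < \<bar>x N\<bar>"
    and h2: "\<bar>x N\<bar> < \<bar>x (N + 1)\<bar>"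
    and h3: "\<bar>x (N + 1)\<bar> < \<bar>x (N + 2)\<bar>"
  shows "(\<forall>n\<ge>N. \<bar>x n\<bar> > 2) \<and> filterlim (\<lambda>n. \<bar>x n\<bar>) at_top sequentially"
proof -
  define y where "y n = \<bar>x (N + n)\<bar>" for n
  define \<delta> where "\<delta> = min (y 1 - y 0) (y 2 - y 1)"
  have y_rec: "y (n + 2) * y (n + 1) - y n \<le> y (n + 3)" for n
  proof -
    have "x (N + n + 3) = x (N + n + 2) * x (N + n + 1) - x (N + n)"
      using rec[of "N + n + 2"] by (simp add: numeral_3_eq_3)
    then show ?thesis
      unfolding y_def using abs_triangle_ineq2[of "x (N + n + 2) * x (N + n + 1)" "x (N + n)"]
      by (simp add: abs_mult add.assoc)
  qed
  have "0 < \<delta>" "2 < y 0" "y 0 + \<delta> \<le> y 1" "y 1 + \<delta> \<le> y 2"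
    using h1 h2 h3 by (auto simp: y_def \<delta>_def min_def)
  note y_growth = increments_ge_of_mult_recurrence_ge[OF y_rec this]
  have "\<forall>n\<ge>N. \<bar>x n\<bar> > 2"
    using y_growth by (metis y_def le_add_diff_inverse)
  moreover have "filterlim (\<lambda>n. y (n - N)) at_top sequentially"
    using filterlim_at_top_of_increments_ge[OF \<open>0 < \<delta>\<close>] y_growth
    by (intro filterlim_compose[OF _ filterlim_minus_const_nat_at_top]) simp
  moreover have "\<forall>\<^sub>F n in sequentially. y (n - N) = \<bar>x n\<bar>"
    unfolding eventually_sequentially y_def by (metis le_add_diff_inverse)
  ultimately show ?thesis
    using filterlim_cong[OF refl refl] by fast
qed

end
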